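(* Let $a\neq0$ and $b\in\mathbb R$, and let $A\in\{X,Y\}$. Suppose $\psi,p$ satisfy $\dot\psi=A\psi$, $\dot p=-A^{\top}p$ for $t\ge0$ with reduced data $(\phi_1,\phi_2,\phi_3)(0)=(0,a,b)$, and let $\tau_A>0$ be the smallest positive zero of $\phi_1$. Then $(\phi_1,\phi_2,\phi_3)(\tau_A)=(0,-a,b)$, for both $A=X$ and $A=Y$. That is, the shortest switching-to-switching $X$-arc and the shortest switching-to-switching $Y$-arc induce the same map $(0,a,b)\mapsto(0,-a,b)$ on reduced data.
   Context: Fix $\gamma\in(0,\pi/2)$, $s=\sin\gamma$, $c=\cos\gamma$, and $X=\begin{pmatrix}0&s^2&sc\\-s^2&0&0\\-sc&0&0\end{pmatrix}$, $Y=\begin{pmatrix}0&1&0\\-1&0&0\\0&0&0\end{pmatrix}$. Let $F_1=X-Y$, $F_2=[X,Y]$, $F_3=[Y,[X,Y]]$ and define the reduced variables $\phi_i(t)=\langle p(t),F_i\psi(t)\rangle$, $i=1,2,3$, with the standard inner product on $\mathbb R^3$. *)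

theory Defs
  imports "HOL-Analysis.Analysis"
begin

definition Xmat :: "real \<Rightarrow> real^3^3" where
  "Xmat \<gamma> = (let s = sin \<gamma>; c = cos \<gamma> in
     vector [vector [0, s^2, s*c], vector [-(s^2), 0, 0], vector [-(s*c), 0, 0]])"

definition Ymat :: "real^3^3" where
  "Ymat = vector [vector [0, 1, 0], vector [-1, 0, 0], vector [0, 0, 0]]"

definition mcomm :: "real^3^3 \<Rightarrow> real^3^3 \<Rightarrow> real^3^3" where
  "mcomm A B = A ** B - B ** A"

definition F1 :: "real \<Rightarrow> real^3^3" where "F1 \<gamma> = Xmat \<gamma> - Ymat"
definition F2 :: "real \<Rightarrow> real^3^3" where "F2 \<gamma> = mcomm (Xmat \<gamma>) Ymat"
definition F3 :: "real \<Rightarrow> real^3^3" where "F3 \<gamma> = mcomm Ymat (mcomm (Xmat \<gamma>) Ymat)"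

definition phi1 :: "real \<Rightarrow> (real \<Rightarrow> real^3) \<Rightarrow> (real \<Rightarrow> real^3) \<Rightarrow> real \<Rightarrow> real" where
  "phi1 \<gamma> p \<psi> t = p t \<bullet> (F1 \<gamma> *v \<psi> t)"
definition phi2 :: "real \<Rightarrow> (real \<Rightarrow> real^3) \<Rightarrow> (real \<Rightarrow> real^3) \<Rightarrow> real \<Rightarrow> real" where
  "phi2 \<gamma> p \<psi> t = p t \<bullet> (F2 \<gamma> *v \<psi> t)"
definition phi3 :: "real \<Rightarrow> (real \<Rightarrow> real^3) \<Rightarrow> (real \<Rightarrow> real^3) \<Rightarrow> real \<Rightarrow> real" where
  "phi3 \<gamma> p \<psi> t = p t \<bullet> (F3 \<gamma> *v \<psi> t)"

end

theory Submission
  imports Defs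
begin

text \<open>
  Along a flow of the adjoint system, the derivative of \<open>\<langle>p, F \<psi>\<rangle>\<close> is \<open>\<langle>p, [F, A] \<psi>\<rangle>\<close>,
  and the brackets of \<open>F\<^sub>1, F\<^sub>2, F\<^sub>3\<close> with \<open>X\<close> and \<open>Y\<close> close up, so the reduced variables
  satisfy a linear ODE. For \<open>A = Y\<close> the pair \<open>(\<phi>\<^sub>2, \<phi>\<^sub>3)\<close> rotates with unit speed and
  \<open>\<phi>\<^sub>1 = \<phi>\<^sub>3 - b\<close>; for \<open>A = X\<close> the pair \<open>(s \<phi>\<^sub>1, \<phi>\<^sub>2)\<close> rotates with speed \<open>s\<close> and
  \<open>\<phi>\<^sub>3 - s\<^sup>2 \<phi>\<^sub>1\<close> is constant. In both cases the first return of \<open>\<phi>\<^sub>1\<close> to zero happens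
  after half a turn of the relevant circle, which flips the sign of \<open>\<phi>\<^sub>2\<close> and restores \<open>\<phi>\<^sub>3\<close>.
\<close>

lemma matrix_vector_mult_uminus_left: "(- M) *v x = - (M *v x)"
  for M :: "real^'n^'m"
  by (simp add: matrix_vector_mult_def vec_eq_iff sum_negf)

lemma inner_matrix_vector_has_derivative:
  fixes A F :: "real^'n^'n" and p \<psi> :: "real \<Rightarrow> real^'n"
  assumes "(\<psi> has_vector_derivative (A *v \<psi> t)) (at t within S)"
    and "(p has_vector_derivative (- (transpose A *v p t))) (at t within S)"
  shows "((\<lambda>t. p t \<bullet> (F *v \<psi> t)) has_real_derivative p t \<bullet> ((F ** A - A ** F) *v \<psi> t))
           (at t within S)"
proof -
  have "((\<lambda>t. F *v \<psi> t) has_vector_derivative F *v (A *v \<psi> t)) (at t within S)"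
    using bounded_linear.has_vector_derivative[OF matrix_vector_mul_bounded_linear assms(1)] .
  from has_derivative_inner[OF assms(2)[unfolded has_vector_derivative_def]
      this[unfolded has_vector_derivative_def]]
  have "((\<lambda>t. p t \<bullet> (F *v \<psi> t)) has_derivative
          (\<lambda>h. p t \<bullet> (h *\<^sub>R (F *v (A *v \<psi> t))) + (h *\<^sub>R - (transpose A *v p t)) \<bullet> (F *v \<psi> t)))
        (at t within S)" .
  moreover have "(\<lambda>h. p t \<bullet> (h *\<^sub>R (F *v (A *v \<psi> t))) + (h *\<^sub>R - (transpose A *v p t)) \<bullet> (F *v \<psi> t))
      = (\<lambda>h. (p t \<bullet> ((F ** A - A ** F) *v \<psi> t)) * h)"
    by (auto simp: matrix_vector_mul_assoc[symmetric] matrix_vector_mult_diff_rdistrib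
        dot_lmul_matrix algebra_simps)
  ultimately show ?thesis
    unfolding has_field_derivative_def by simp
qed

lemmas matrix_3_simps = vec_eq_iff forall_3 matrix_matrix_mult_def sum_3
  Xmat_def Ymat_def F1_def F2_def F3_def mcomm_def Let_def

lemma mcomm_F1_Ymat: "mcomm (F1 \<gamma>) Ymat = F2 \<gamma>"
  by (simp add: matrix_3_simps algebra_simps)

lemma mcomm_F2_Ymat: "mcomm (F2 \<gamma>) Ymat = - F3 \<gamma>"
  by (simp add: matrix_3_simps algebra_simps)

lemma mcomm_F3_Ymat: "mcomm (F3 \<gamma>) Ymat = F2 \<gamma>"
  by (simp add: matrix_3_simps algebra_simps)

lemma mcomm_F1_Xmat: "mcomm (F1 \<gamma>) (Xmat \<gamma>) = F2 \<gamma>"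
  by (simp add: matrix_3_simps algebra_simps)

lemma mcomm_F2_Xmat: "mcomm (F2 \<gamma>) (Xmat \<gamma>) = - ((sin \<gamma>)\<^sup>2 *\<^sub>R F1 \<gamma>)"
proof -
  have "cos \<gamma> * (cos \<gamma> * (sin \<gamma> * sin \<gamma>)) + sin \<gamma> * (sin \<gamma> * (sin \<gamma> * sin \<gamma>))
      = sin \<gamma> * sin \<gamma> * ((sin \<gamma>)\<^sup>2 + (cos \<gamma>)\<^sup>2)"
    by algebra
  also have "\<dots> = sin \<gamma> * sin \<gamma>"
    by simp
  finally show ?thesis
    by (simp add: matrix_3_simps algebra_simps power2_eq_square)
qed

lemma mcomm_F3_Xmat: "mcomm (F3 \<gamma>) (Xmat \<gamma>) = (sin \<gamma>)\<^sup>2 *\<^sub>R F2 \<gamma>"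
  by (simp add: matrix_3_simps algebra_simps power2_eq_square)

lemma reduced_ode_Ymat:
  fixes \<psi> p :: "real \<Rightarrow> real^3"
  assumes "(\<psi> has_vector_derivative (Ymat *v \<psi> t)) (at t within S)"
    and "(p has_vector_derivative (- (transpose Ymat *v p t))) (at t within S)"
  shows "(phi1 \<gamma> p \<psi> has_real_derivative phi2 \<gamma> p \<psi> t) (at t within S)"
    and "(phi2 \<gamma> p \<psi> has_real_derivative - phi3 \<gamma> p \<psi> t) (at t within S)"
    and "(phi3 \<gamma> p \<psi> has_real_derivative phi2 \<gamma> p \<psi> t) (at t within S)"
proof -
  have D: "((\<lambda>t. p t \<bullet> (F *v \<psi> t)) has_real_derivative p t \<bullet> (mcomm F Ymat *v \<psi> t))
             (at t within S)" for F
    unfolding mcomm_def using inner_matrix_vector_has_derivative assms .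
  show "(phi1 \<gamma> p \<psi> has_real_derivative phi2 \<gamma> p \<psi> t) (at t within S)"
    using D[of "F1 \<gamma>"] by (simp add: phi1_def[abs_def] phi2_def mcomm_F1_Ymat)
  show "(phi2 \<gamma> p \<psi> has_real_derivative - phi3 \<gamma> p \<psi> t) (at t within S)"
    using D[of "F2 \<gamma>"]
    by (simp add: phi2_def[abs_def] phi3_def mcomm_F2_Ymat matrix_vector_mult_uminus_left)
  show "(phi3 \<gamma> p \<psi> has_real_derivative phi2 \<gamma> p \<psi> t) (at t within S)"
    using D[of "F3 \<gamma>"] by (simp add: phi3_def[abs_def] phi2_def mcomm_F3_Ymat)
qed

lemma reduced_ode_Xmat:
  fixes \<psi> p :: "real \<Rightarrow> real^3"
  assumes "(\<psi> has_vector_derivative (Xmat \<gamma> *v \<psi> t)) (at t within S)"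
    and "(p has_vector_derivative (- (transpose (Xmat \<gamma>) *v p t))) (at t within S)"
  shows "(phi1 \<gamma> p \<psi> has_real_derivative phi2 \<gamma> p \<psi> t) (at t within S)"
    and "(phi2 \<gamma> p \<psi> has_real_derivative - (sin \<gamma>)\<^sup>2 * phi1 \<gamma> p \<psi> t) (at t within S)"
    and "(phi3 \<gamma> p \<psi> has_real_derivative (sin \<gamma>)\<^sup>2 * phi2 \<gamma> p \<psi> t) (at t within S)"
proof -
  have D: "((\<lambda>t. p t \<bullet> (F *v \<psi> t)) has_real_derivative p t \<bullet> (mcomm F (Xmat \<gamma>) *v \<psi> t))
             (at t within S)" for F
    unfolding mcomm_def using inner_matrix_vector_has_derivative assms .
  show "(phi1 \<gamma> p \<psi> has_real_derivative phi2 \<gamma> p \<psi> t) (at t within S)"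
    using D[of "F1 \<gamma>"] by (simp add: phi1_def[abs_def] phi2_def mcomm_F1_Xmat)
  show "(phi2 \<gamma> p \<psi> has_real_derivative - (sin \<gamma>)\<^sup>2 * phi1 \<gamma> p \<psi> t) (at t within S)"
    using D[of "F2 \<gamma>"]
    by (simp add: phi2_def[abs_def] phi1_def mcomm_F2_Xmat matrix_vector_mult_uminus_left
        scaleR_matrix_vector_assoc[symmetric])
  show "(phi3 \<gamma> p \<psi> has_real_derivative (sin \<gamma>)\<^sup>2 * phi2 \<gamma> p \<psi> t) (at t within S)"
    using D[of "F3 \<gamma>"]
    by (simp add: phi3_def[abs_def] phi2_def mcomm_F3_Xmat scaleR_matrix_vector_assoc[symmetric])
qed

lemma has_real_derivative_zero_imp_constant_nonneg:
  fixes f :: "real \<Rightarrow> real"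
  assumes "\<And>t. t \<ge> 0 \<Longrightarrow> (f has_real_derivative 0) (at t within {0..})" and "t \<ge> 0"
  shows "f t = f 0"
proof -
  obtain c where "\<forall>x\<in>{0..}. f x = c"
    using has_field_derivative_zero_constant[of "{0..}" f] assms(1) by (auto simp: convex_real_interval)
  then show ?thesis
    using assms(2) by auto
qed

lemma rotation_ode_solution:
  fixes u v :: "real \<Rightarrow> real" and \<omega> t :: real
  assumes du: "\<And>t. t \<ge> 0 \<Longrightarrow> (u has_real_derivative \<omega> * v t) (at t within {0..})"
    and dv: "\<And>t. t \<ge> 0 \<Longrightarrow> (v has_real_derivative - \<omega> * u t) (at t within {0..})"
    and "t \<ge> 0"
  shows "u t = u 0 * cos (\<omega> * t) + v 0 * sin (\<omega> * t)"
    and "v t = v 0 * cos (\<omega> * t) - u 0 * sin (\<omega> * t)"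
proof -
  define P where "P t = u t * cos (\<omega> * t) - v t * sin (\<omega> * t)" for t
  define Q where "Q t = u t * sin (\<omega> * t) + v t * cos (\<omega> * t)" for t
  have "P t = P 0"
    unfolding P_def using \<open>t \<ge> 0\<close>
    by (intro has_real_derivative_zero_imp_constant_nonneg)
      (auto intro!: derivative_eq_intros du dv simp: algebra_simps)
  then have P: "P t = u 0"
    by (simp add: P_def)
  have "Q t = Q 0"
    unfolding Q_def using \<open>t \<ge> 0\<close>
    by (intro has_real_derivative_zero_imp_constant_nonneg)
      (auto intro!: derivative_eq_intros du dv simp: algebra_simps)
  then have Q: "Q t = v 0"
    by (simp add: Q_def)
  have "u t = P t * cos (\<omega> * t) + Q t * sin (\<omega> * t)"
    and "v t = Q t * cos (\<omega> * t) - P t * sin (\<omega> * t)"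
    unfolding P_def Q_def using sin_cos_squared_add[of "\<omega> * t"] by algebra+
  then show "u t = u 0 * cos (\<omega> * t) + v 0 * sin (\<omega> * t)"
    and "v t = v 0 * cos (\<omega> * t) - u 0 * sin (\<omega> * t)"
    unfolding P Q .
qed

lemma sin_first_positive_zero:
  assumes "0 < x" "sin x = 0" and "\<And>y. 0 < y \<Longrightarrow> y < x \<Longrightarrow> sin y \<noteq> 0"
  shows "x = pi"
proof -
  have "\<not> x < pi"
    using sin_gt_zero[of x] assms(1,2) by auto
  moreover have "\<not> pi < x"
    using assms(3)[of pi] by auto
  ultimately show ?thesis
    by simp
qed

text \<open>
  The key is the half-angle factorisation
  \<open>a sin (2v) + b cos (2v) - b = 2 sin v (a cos v - b sin v)\<close>: the first factor cannot
  vanish first, since \<open>a cos v - b sin v\<close> changes sign on \<open>[0, \<pi>]\<close>.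
\<close>

lemma rotation_first_return_reflects:
  fixes a b \<tau> :: real
  assumes "a \<noteq> 0" "0 < \<tau>" "a * sin \<tau> + b * cos \<tau> = b"
    and first: "\<And>t. 0 < t \<Longrightarrow> t < \<tau> \<Longrightarrow> a * sin t + b * cos t \<noteq> b"
  shows "a * cos \<tau> - b * sin \<tau> = - a"
proof -
  define k where "k v = a * cos v - b * sin v" for v
  have half_angle: "a * sin (2 * v) + b * cos (2 * v) - b = 2 * sin v * k v" for v
    unfolding k_def sin_double cos_double_sin by (simp add: algebra_simps power2_eq_square)
  define u where "u = \<tau> / 2"
  have \<tau>: "\<tau> = 2 * u" and "u > 0"
    using \<open>0 < \<tau>\<close> by (auto simp: u_def)
  have "sin u \<noteq> 0"
  proof
    assume "sin u = 0"
    then have "pi \<le> u"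
      using sin_gt_zero[of u] \<open>u > 0\<close> by force
    have "\<exists>v. 0 \<le> v \<and> v \<le> pi \<and> k v = 0"
    proof -
      have "continuous_on {0..pi} k"
        unfolding k_def by (intro continuous_intros)
      moreover have "k 0 = a" "k pi = - a"
        by (simp_all add: k_def)
      ultimately show ?thesis
        using IVT'[of k 0 0 pi] IVT2'[of k pi 0 0] \<open>a \<noteq> 0\<close>
        by (cases "a > 0") auto
    qed
    then obtain v where "0 \<le> v" "v \<le> pi" "k v = 0"
      by blast
    moreover have "v \<noteq> 0" "v \<noteq> pi"
      using \<open>k v = 0\<close> \<open>a \<noteq> 0\<close> by (auto simp: k_def)
    ultimately show False
      using first[of "2 * v"] half_angle[of v] \<open>pi \<le> u\<close> \<tau> by auto
  qed
  moreover have "sin u * k u = 0"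
    using assms(3) half_angle[of u] \<tau> by simp
  ultimately have "a * cos u = b * sin u"
    by (simp add: k_def)
  then have "a * cos \<tau> - b * sin \<tau> = - a * ((sin u)\<^sup>2 + (cos u)\<^sup>2)"
    unfolding \<tau> sin_double cos_double by algebra
  then show ?thesis
    by simp
qed

lemma Ymat_arc_reduced_map:
  fixes f g h :: "real \<Rightarrow> real"
  assumes df: "\<And>t. t \<ge> 0 \<Longrightarrow> (f has_real_derivative g t) (at t within {0..})"
    and dg: "\<And>t. t \<ge> 0 \<Longrightarrow> (g has_real_derivative - h t) (at t within {0..})"
    and dh: "\<And>t. t \<ge> 0 \<Longrightarrow> (h has_real_derivative g t) (at t within {0..})"
    and "f 0 = 0" "g 0 = a" "h 0 = b" "a \<noteq> 0"
    and "0 < \<tau>" "f \<tau> = 0" "\<And>t. 0 < t \<Longrightarrow> t < \<tau> \<Longrightarrow> f t \<noteq> 0"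
  shows "g \<tau> = - a \<and> h \<tau> = b"
proof -
  have g_eq: "g t = a * cos t - b * sin t" and h_eq: "h t = b * cos t + a * sin t" if "t \<ge> 0" for t
    using rotation_ode_solution[of h 1 g, OF _ _ that] dg dh assms(5,6) by simp_all
  have f_eq: "f t = h t - b" if "t \<ge> 0" for t
  proof -
    have "f t - h t = f 0 - h 0"
      using that by (intro has_real_derivative_zero_imp_constant_nonneg[of "\<lambda>t. f t - h t"])
        (auto intro!: derivative_eq_intros df dh)
    then show ?thesis
      using assms(4,6) by simp
  qed
  have "a * cos \<tau> - b * sin \<tau> = - a"
    using assms(7-10) f_eq h_eq by (intro rotation_first_return_reflects) (auto simp: algebra_simps)
  then show ?thesis
    using f_eq g_eq assms(8,9) by auto
qed

lemma Xmat_arc_reduced_map: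
  fixes f g h :: "real \<Rightarrow> real" and s :: real
  assumes "s > 0"
    and df: "\<And>t. t \<ge> 0 \<Longrightarrow> (f has_real_derivative g t) (at t within {0..})"
    and dg: "\<And>t. t \<ge> 0 \<Longrightarrow> (g has_real_derivative - s\<^sup>2 * f t) (at t within {0..})"
    and dh: "\<And>t. t \<ge> 0 \<Longrightarrow> (h has_real_derivative s\<^sup>2 * g t) (at t within {0..})"
    and "f 0 = 0" "g 0 = a" "h 0 = b" "a \<noteq> 0"
    and "0 < \<tau>" "f \<tau> = 0" "\<And>t. 0 < t \<Longrightarrow> t < \<tau> \<Longrightarrow> f t \<noteq> 0"
  shows "g \<tau> = - a \<and> h \<tau> = b"
proof -
  have "((\<lambda>t. s * f t) has_real_derivative s * g t) (at t within {0..})" if "t \<ge> 0" for t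
    using that by (auto intro!: derivative_eq_intros df)
  moreover have "(g has_real_derivative - s * (s * f t)) (at t within {0..})" if "t \<ge> 0" for t
    using dg[OF that] by (simp add: power2_eq_square mult.assoc)
  ultimately have f_eq: "s * f t = a * sin (s * t)" and g_eq: "g t = a * cos (s * t)"
    if "t \<ge> 0" for t
    using rotation_ode_solution[of "\<lambda>t. s * f t" s g, OF _ _ that] assms(5,6) by simp_all
  have h_eq: "h t = b + s\<^sup>2 * f t" if "t \<ge> 0" for t
  proof -
    have "h t - s\<^sup>2 * f t = h 0 - s\<^sup>2 * f 0"
      using that by (intro has_real_derivative_zero_imp_constant_nonneg[of "\<lambda>t. h t - s\<^sup>2 * f t"])
        (auto intro!: derivative_eq_intros df dh)
    then show ?thesis
      using assms(5,7) by simp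
  qed
  have "s * \<tau> = pi"
  proof (rule sin_first_positive_zero)
    show "0 < s * \<tau>"
      using \<open>s > 0\<close> \<open>0 < \<tau>\<close> by simp
    show "sin (s * \<tau>) = 0"
      using f_eq[of \<tau>] assms(8-10) by simp
    show "sin y \<noteq> 0" if "0 < y" "y < s * \<tau>" for y
    proof -
      have "f (y / s) \<noteq> 0"
        using assms(11) that \<open>s > 0\<close> by (simp add: field_simps)
      then show ?thesis
        using f_eq[of "y / s"] that \<open>s > 0\<close> by auto
    qed
  qed
  then show ?thesis
    using g_eq[of \<tau>] h_eq[of \<tau>] assms(9,10) by simp
qed

theorem mainTheorem8:
  fixes \<gamma> a b \<tau> :: real and A :: "real^3^3" and \<psi> p :: "real \<Rightarrow> real^3"
  assumes "0 < \<gamma>" "\<gamma> < pi / 2"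
    and "a \<noteq> 0"
    and "A \<in> {Xmat \<gamma>, Ymat}"
    and "\<And>t. t \<ge> 0 \<Longrightarrow> (\<psi> has_vector_derivative (A *v \<psi> t)) (at t within {0..})"
    and "\<And>t. t \<ge> 0 \<Longrightarrow> (p has_vector_derivative (- (transpose A *v p t))) (at t within {0..})"
    and "phi1 \<gamma> p \<psi> 0 = 0" "phi2 \<gamma> p \<psi> 0 = a" "phi3 \<gamma> p \<psi> 0 = b"
    and "0 < \<tau>" "phi1 \<gamma> p \<psi> \<tau> = 0"
    and "\<And>t. 0 < t \<Longrightarrow> t < \<tau> \<Longrightarrow> phi1 \<gamma> p \<psi> t \<noteq> 0"
  shows "phi1 \<gamma> p \<psi> \<tau> = 0 \<and> phi2 \<gamma> p \<psi> \<tau> = - a \<and> phi3 \<gamma> p \<psi> \<tau> = b"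
proof -
  consider "A = Ymat" | "A = Xmat \<gamma>"
    using assms(4) by blast
  then have "phi2 \<gamma> p \<psi> \<tau> = - a \<and> phi3 \<gamma> p \<psi> \<tau> = b"
  proof cases
    case 1
    then show ?thesis
      using assms(5,6) reduced_ode_Ymat[of \<psi> _ _ p \<gamma>]
      by (intro Ymat_arc_reduced_map[where f = "phi1 \<gamma> p \<psi>"] assms(3,7-12)) auto
  next
    case 2
    have "0 < sin \<gamma>"
      using assms(1,2) by (intro sin_gt_zero) auto
    then show ?thesis
      using 2 assms(5,6) reduced_ode_Xmat[of \<psi> \<gamma> _ _ p]
      by (intro Xmat_arc_reduced_map[where f = "phi1 \<gamma> p \<psi>"] assms(3,7-12)) auto
  qed
  with assms(11) show ?thesis
    by blast
qed

end
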